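(* Let $M$ be a finitary matroid on $E$, $B$ a base of $M$, and $H\subseteq E\setminus B$ such that $\kappa:=|H|$ is an uncountable regular cardinal. Suppose there is $B'\subseteq B$ with $|B'|<\kappa$ such that $C_M(e,B)\cap B'\neq\emptyset$ for every $e\in H$. Then there exist $e^*\in H$ and a $\Delta$-system $\mathcal{D}$ of $\kappa$ many circuits of $M$ with kernel $K$ such that $\bigcup\mathcal{D}\subseteq\bigcup_{e\in H}C_M(e,B)$ and $e^*\in K\subseteq C_M(e^*,B)\setminus B'$.
   Context: $C_M(e,B)$ is the fundamental circuit of $e\notin B$ on the base $B$ (the unique circuit in $B\cup\{e\}$). A $\Delta$-system is a family of (at least two) sets any two of which have the same intersection $K$, called its kernel; the sets $C\setminus K$ for members $C$ are its petals. *)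

theory Defs
  imports "HOL-Library.Countable_Set"
begin

definition finitary_matroid :: "'a set \<Rightarrow> ('a set \<Rightarrow> bool) \<Rightarrow> bool" where
  "finitary_matroid E indep \<longleftrightarrow>
     (\<forall>I. indep I \<longrightarrow> I \<subseteq> E) \<and>
     indep {} \<and>
     (\<forall>I J. indep J \<and> I \<subseteq> J \<longrightarrow> indep I) \<and>
     (\<forall>I J. finite I \<and> finite J \<and> indep I \<and> indep J \<and> card I < card J
        \<longrightarrow> (\<exists>x\<in>J - I. indep (insert x I))) \<and>
     (\<forall>I. I \<subseteq> E \<and> (\<forall>F. F \<subseteq> I \<and> finite F \<longrightarrow> indep F) \<longrightarrow> indep I)"

definition is_base :: "('a set \<Rightarrow> bool) \<Rightarrow> 'a set \<Rightarrow> bool" where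
  "is_base indep B \<longleftrightarrow> indep B \<and> (\<forall>I. indep I \<and> B \<subseteq> I \<longrightarrow> I = B)"

definition is_circuit :: "'a set \<Rightarrow> ('a set \<Rightarrow> bool) \<Rightarrow> 'a set \<Rightarrow> bool" where
  "is_circuit E indep C \<longleftrightarrow> C \<subseteq> E \<and> \<not> indep C \<and> (\<forall>D. D \<subset> C \<longrightarrow> indep D)"

definition fund_circuit :: "'a set \<Rightarrow> ('a set \<Rightarrow> bool) \<Rightarrow> 'a \<Rightarrow> 'a set \<Rightarrow> 'a set" where
  "fund_circuit E indep e B = (THE C. is_circuit E indep C \<and> C \<subseteq> insert e B)"

definition delta_system :: "'a set set \<Rightarrow> 'a set \<Rightarrow> bool" where
  "delta_system D K \<longleftrightarrow> (\<exists>C1\<in>D. \<exists>C2\<in>D. C1 \<noteq> C2) \<and>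
     (\<forall>C1\<in>D. \<forall>C2\<in>D. C1 \<noteq> C2 \<longrightarrow> C1 \<inter> C2 = K)"

end

theory Submission
  imports Defs "HOL-Library.Countable_Set_Type" "HOL-Library.Disjoint_Sets"
begin

text \<open>Write \<kappa> = |H| and call sets of size < \<kappa> small. By the \<Delta>-system lemma for the regular
  uncountable \<kappa> we may pass to \<kappa> many e \<in> H whose fundamental circuits form a \<Delta>-system with
  kernel R and, as |B'| < \<kappa>, to those whose circuits meet B' exactly in S = R \<inter> B', which is
  nonempty. In the contraction by B - S every finite set of such elements has rank at most |S|;
  let m be the least bound that holds on a co-small set Y0 of them. For e \<in> Y0 there are then,
  avoiding any small set, finite G \<subseteq> Y0 such that G + e has the same contracted rank as G, hence
  circuits D_G through e inside e + G + (B - S); these avoid S and meet G. Choosing \<kappa> many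
  pairwise disjoint such G and fixing the trace D_G \<inter> C(e,B), which takes only finitely many
  values, leaves \<kappa> circuits any two of which meet only in that trace: outside C(e,B) they lie
  in disjoint petals of the first \<Delta>-system.\<close>

unbundle cardinal_syntax

section \<open>Large families below a regular uncountable cardinal\<close>

text \<open>An indexed \<Delta>-system; unlike delta_system it does not demand two distinct members.\<close>
definition delta_family_on :: "('i \<Rightarrow> 'a set) \<Rightarrow> 'i set \<Rightarrow> 'a set \<Rightarrow> bool" where
  "delta_family_on f A R \<longleftrightarrow> (\<forall>x\<in>A. \<forall>y\<in>A. x \<noteq> y \<longrightarrow> f x \<inter> f y = R)"

lemma delta_family_on_subset: "delta_family_on f A R \<Longrightarrow> A' \<subseteq> A \<Longrightarrow> delta_family_on f A' R"
  unfolding delta_family_on_def by blast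

lemma delta_family_on_kernel_subset:
  assumes "delta_family_on f A R" "x \<in> A" "y \<in> A" "x \<noteq> y"
  shows "R \<subseteq> f x"
  using assms unfolding delta_family_on_def by blast

lemma delta_system_image:
  assumes "delta_family_on D A T" "inj_on D A" "x \<in> A" "y \<in> A" "x \<noteq> y"
  shows "delta_system (D ` A) T"
  unfolding delta_system_def
proof (intro conjI ballI impI)
  have "D x \<noteq> D y"
    using inj_onD[OF assms(2) _ assms(3,4)] assms(5) by blast
  then show "\<exists>C1\<in>D ` A. \<exists>C2\<in>D ` A. C1 \<noteq> C2"
    using assms(3,4) by blast
  fix C1 C2 assume "C1 \<in> D ` A" "C2 \<in> D ` A" "C1 \<noteq> C2"
  then obtain a b where "a \<in> A" "b \<in> A" "a \<noteq> b" "C1 = D a" "C2 = D b"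
    by blast
  then show "C1 \<inter> C2 = T"
    using assms(1) unfolding delta_family_on_def by blast
qed

lemma card_of_disjoint_family_le:
  assumes "disjoint F" "\<And>G. G \<in> F \<Longrightarrow> G \<noteq> {} \<and> G \<subseteq> A"
  shows "|F| \<le>o |A|"
proof (rule card_of_ordLeqI)
  have some_in: "(SOME x. x \<in> G) \<in> G" if "G \<in> F" for G
    using assms(2)[OF that] by (simp add: some_in_eq)
  show "inj_on (\<lambda>G. SOME x. x \<in> G) F"
  proof (rule inj_onI)
    fix G1 G2 assume "G1 \<in> F" "G2 \<in> F" "(SOME x. x \<in> G1) = (SOME x. x \<in> G2)"
    then show "G1 = G2"
      using some_in assms(1) unfolding disjoint_def by (metis disjoint_iff)
  qed
  show "(SOME x. x \<in> G) \<in> A" if "G \<in> F" for G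
    using some_in[OF that] assms(2)[OF that] by blast
qed

locale regular_uncountable =
  fixes \<kappa> :: "'k set"
  assumes uncountable: "uncountable \<kappa>" and regular: "regularCard |\<kappa>|"
begin

abbreviation small :: "'b set \<Rightarrow> bool" where "small X \<equiv> |X| <o |\<kappa>|"

lemma infinite_kappa: "infinite \<kappa>"
  using uncountable countable_finite by blast

lemma Cinfinite: "Cinfinite |\<kappa>|"
  using infinite_kappa by (simp add: cinfinite_def Field_card_of card_of_Card_order card_of_card_order_on)

lemma small_countable:
  assumes "countable X" shows "small X"
proof -
  have "\<not> |\<kappa>| \<le>o |UNIV :: nat set|"
    using uncountable countable_card_of_nat by blast
  then have "|UNIV :: nat set| <o |\<kappa>|"
    by (simp add: card_of_Well_order not_ordLeq_iff_ordLess)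
  then show ?thesis
    using assms countable_card_of_nat ordLeq_ordLess_trans by blast
qed

lemma small_finite: "finite X \<Longrightarrow> small X"
  by (simp add: countable_finite small_countable)

lemma not_small_infinite: "\<not> small X \<Longrightarrow> infinite X"
  using small_finite by blast

lemma not_small_card_of_ge: "\<not> small X \<Longrightarrow> |\<kappa>| \<le>o |X|"
  by (simp add: card_of_Well_order not_ordLess_iff_ordLeq)

lemma small_subset: "X \<subseteq> Y \<Longrightarrow> small Y \<Longrightarrow> small X"
  using card_of_mono1 ordLeq_ordLess_trans by blast

lemma small_Un: "small X \<Longrightarrow> small Y \<Longrightarrow> small (X \<union> Y)"
  by (rule card_of_Un_ordLess_infinite[OF infinite_kappa])

lemma small_UN: "small I \<Longrightarrow> (\<And>i. i \<in> I \<Longrightarrow> small (A i)) \<Longrightarrow> small (\<Union>i\<in>I. A i)"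
  by (rule regularCard_UNION_bound[OF Cinfinite regular])

lemma not_small_Diff:
  assumes "\<not> small X" "small Y" shows "\<not> small (X - Y)"
proof
  assume "small (X - Y)"
  then have "small ((X - Y) \<union> Y)"
    using assms(2) by (rule small_Un)
  then show False
    using assms(1) small_subset[of X "(X - Y) \<union> Y"] by blast
qed

lemma large_fibre:
  assumes "\<not> small A" "countable (f ` A)"
  obtains y where "\<not> small {x\<in>A. f x = y}"
proof -
  have "A = (\<Union>y\<in>f ` A. {x\<in>A. f x = y})" by blast
  then have "\<not> small (\<Union>y\<in>f ` A. {x\<in>A. f x = y})"
    using assms(1) by simp
  then show ?thesis
    using small_UN[OF small_countable[OF assms(2)], of "\<lambda>y. {x\<in>A. f x = y}"] that by blast
qed

lemma large_disjoint_subfamily: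
  assumes extend: "\<And>A'. A' \<subseteq> A \<Longrightarrow> small A' \<Longrightarrow> \<exists>x\<in>A - A'. \<forall>y\<in>A'. f x \<inter> f y = {}"
  obtains A' where "A' \<subseteq> A" "\<not> small A'" "disjoint_family_on f A'"
proof -
  define F where "F = {A'. A' \<subseteq> A \<and> disjoint_family_on f A'}"
  have "\<Union>\<C> \<in> F" if "\<C> \<in> chains F" for \<C>
  proof -
    have \<C>: "\<C> \<subseteq> F" "chain\<^sub>\<subseteq> \<C>"
      using that unfolding chains_def by simp_all
    have "f x \<inter> f y = {}" if xy: "x \<in> \<Union>\<C>" "y \<in> \<Union>\<C>" "x \<noteq> y" for x y
    proof -
      obtain X Y where XY: "X \<in> \<C>" "Y \<in> \<C>" "x \<in> X" "y \<in> Y"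
        using xy by blast
      then have "X \<subseteq> Y \<or> Y \<subseteq> X"
        using \<C>(2) unfolding chain_subset_def by blast
      then have "x \<in> Y \<and> y \<in> Y \<and> Y \<in> F \<or> x \<in> X \<and> y \<in> X \<and> X \<in> F"
        using XY \<C>(1) by blast
      then show ?thesis
        using xy(3) unfolding F_def disjoint_family_on_def by blast
    qed
    moreover have "\<Union>\<C> \<subseteq> A"
      using \<C>(1) unfolding F_def by blast
    ultimately show ?thesis
      unfolding F_def disjoint_family_on_def by blast
  qed
  then obtain M where M: "M \<in> F" and max: "\<And>X. X \<in> F \<Longrightarrow> M \<subseteq> X \<Longrightarrow> X = M"
    using Zorn_Lemma[of F] by blast
  have MA: "M \<subseteq> A"
    using M unfolding F_def by simp
  have "\<not> small M"
  proof
    assume "small M"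
    then obtain x where x: "x \<in> A - M" "\<forall>y\<in>M. f x \<inter> f y = {}"
      using extend[OF MA] by blast
    then have "insert x M \<in> F"
      using M unfolding F_def by (auto simp: disjoint_family_on_insert)
    then have "insert x M = M"
      using max[of "insert x M"] by blast
    then show False
      using x(1) by blast
  qed
  with MA M show ?thesis
    unfolding F_def by (intro that) simp_all
qed

lemma large_disjoint_subfamily_sparse:
  assumes finite: "\<And>x. x \<in> A \<Longrightarrow> finite (f x)"
    and sparse: "\<And>b. small {x\<in>A. b \<in> f x}" and large: "\<not> small A"
  obtains A' where "A' \<subseteq> A" "\<not> small A'" "disjoint_family_on f A'"
proof (rule large_disjoint_subfamily)
  fix A' assume A': "A' \<subseteq> A" "small A'"
  let ?met = "\<Union>b\<in>(\<Union>y\<in>A'. f y). {x\<in>A. b \<in> f x}"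
  have "small (\<Union>y\<in>A'. f y)"
    using A' finite small_finite by (intro small_UN) auto
  then have "small ?met"
    using sparse by (rule small_UN)
  then have "\<not> small (A - A' - ?met)"
    using large A'(2) by (intro not_small_Diff) auto
  then have "infinite (A - A' - ?met)"
    by (rule not_small_infinite)
  then obtain x where "x \<in> A - A' - ?met"
    using infinite_imp_nonempty by blast
  then show "\<exists>x\<in>A - A'. \<forall>y\<in>A'. f x \<inter> f y = {}"
    by blast
qed

lemma large_delta_subfamily_card_le:
  assumes "\<not> small A" "\<And>x. x \<in> A \<Longrightarrow> finite (f x) \<and> card (f x) \<le> n" "inj_on f A"
  shows "\<exists>A'\<subseteq>A. \<not> small A' \<and> (\<exists>R. delta_family_on f A' R)"
  using assms
proof (induction n arbitrary: A f)
  case 0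
  then have empty: "{x\<in>A. b \<in> f x} = {}" for b
    by fastforce
  have "small {x\<in>A. b \<in> f x}" for b
    unfolding empty by (rule small_finite) simp
  then obtain A' where "A' \<subseteq> A" "\<not> small A'" "disjoint_family_on f A'"
    using large_disjoint_subfamily_sparse[of A f] 0 by blast
  then show ?case
    unfolding delta_family_on_def disjoint_family_on_def by blast
next
  case (Suc n)
  show ?case
  proof (cases "\<forall>b. small {x\<in>A. b \<in> f x}")
    case True
    then obtain A' where "A' \<subseteq> A" "\<not> small A'" "disjoint_family_on f A'"
      using large_disjoint_subfamily_sparse[of A f] Suc.prems by blast
    then show ?thesis
      unfolding delta_family_on_def disjoint_family_on_def by blast
  next
    case False
    then obtain b where large_b: "\<not> small {x\<in>A. b \<in> f x}"
      by blast
    define Ab where "Ab = {x\<in>A. b \<in> f x}"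
    have "\<not> small Ab"
      using large_b unfolding Ab_def .
    moreover have "\<And>x. x \<in> Ab \<Longrightarrow> finite (f x - {b}) \<and> card (f x - {b}) \<le> n"
      using Suc.prems(2) unfolding Ab_def by (fastforce simp: card_Diff_singleton)
    moreover have "inj_on (\<lambda>x. f x - {b}) Ab"
    proof (rule inj_onI)
      fix x y assume "x \<in> Ab" "y \<in> Ab" "f x - {b} = f y - {b}"
      then have "f x = f y"
        unfolding Ab_def by blast
      with \<open>x \<in> Ab\<close> \<open>y \<in> Ab\<close> show "x = y"
        using Suc.prems(3) unfolding Ab_def inj_on_def by blast
    qed
    ultimately have "\<exists>A'\<subseteq>Ab. \<not> small A' \<and> (\<exists>R. delta_family_on (\<lambda>x. f x - {b}) A' R)"
      by (rule Suc.IH)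
    then obtain A' R where A': "A' \<subseteq> Ab" "\<not> small A'" "delta_family_on (\<lambda>x. f x - {b}) A' R"
      by blast
    then have "delta_family_on f A' (insert b R)"
      unfolding delta_family_on_def Ab_def by blast
    with A' show ?thesis
      unfolding Ab_def by blast
  qed
qed

lemma large_delta_subfamily:
  assumes "\<not> small A" "\<And>x. x \<in> A \<Longrightarrow> finite (f x)" "inj_on f A"
  obtains A' R where "A' \<subseteq> A" "\<not> small A'" "delta_family_on f A' R"
proof -
  obtain n where n: "\<not> small {x\<in>A. card (f x) = n}"
    using large_fibre[OF assms(1), of "\<lambda>x. card (f x)"] by blast
  have "inj_on f {x\<in>A. card (f x) = n}"
    using assms(3) by (rule inj_on_subset) blast
  then have "\<exists>A'\<subseteq>{x\<in>A. card (f x) = n}. \<not> small A' \<and> (\<exists>R. delta_family_on f A' R)"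
    using assms(2) by (intro large_delta_subfamily_card_le[OF n, of f n]) auto
  then show ?thesis
    using that by blast
qed

lemma large_delta_avoiding:
  assumes large: "\<not> small A" and delta: "delta_family_on f A R" and "small Z"
  obtains A' where "A' \<subseteq> A" "\<not> small A'" "\<And>x. x \<in> A' \<Longrightarrow> R \<subseteq> f x \<and> f x \<inter> Z = R \<inter> Z"
proof -
  define Bad where "Bad = {x\<in>A. (f x - R) \<inter> Z \<noteq> {}}"
  define g where "g x = (SOME z. z \<in> (f x - R) \<inter> Z)" for x
  have g: "g x \<in> (f x - R) \<inter> Z" if "x \<in> Bad" for x
  proof -
    have "\<exists>z. z \<in> (f x - R) \<inter> Z"
      using that unfolding Bad_def by blast
    then show ?thesis
      unfolding g_def by (rule someI_ex)
  qed
  \<comment> \<open>the petals are pairwise disjoint, so each point of Z lies in at most one of them\<close>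
  have "inj_on g Bad"
  proof (rule inj_onI)
    fix x y assume xy: "x \<in> Bad" "y \<in> Bad" "g x = g y"
    show "x = y"
    proof (rule ccontr)
      assume "x \<noteq> y"
      moreover have "x \<in> A" "y \<in> A"
        using xy(1,2) unfolding Bad_def by simp_all
      ultimately have "f x \<inter> f y = R"
        using delta unfolding delta_family_on_def by blast
      moreover have "g x \<in> f x - R" "g x \<in> f y"
        using g[OF xy(1)] g[OF xy(2)] xy(3) by simp_all
      ultimately show False
        by blast
    qed
  qed
  moreover have "\<And>x. x \<in> Bad \<Longrightarrow> g x \<in> Z"
    using g by blast
  ultimately have "|Bad| \<le>o |Z|"
    by (rule card_of_ordLeqI)
  then have "small Bad"
    using \<open>small Z\<close> by (rule ordLeq_ordLess_trans)
  then have "\<not> small (A - Bad)"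
    using large by (rule not_small_Diff[rotated])
  moreover have "R \<subseteq> f x" if "x \<in> A" for x
  proof -
    have "infinite (A - {x})"
      using not_small_infinite[OF large] by simp
    then obtain y where "y \<in> A - {x}"
      using infinite_imp_nonempty by blast
    then show ?thesis
      using delta_family_on_kernel_subset[OF delta that] by blast
  qed
  moreover have "f x \<inter> Z = R \<inter> Z" if "x \<in> A - Bad" "R \<subseteq> f x" for x
    using that unfolding Bad_def by blast
  ultimately show ?thesis
    using that[of "A - Bad"] by blast
qed

lemma large_delta_subfamily_avoiding:
  assumes "\<not> small A" "\<And>x. x \<in> A \<Longrightarrow> finite (f x)" "inj_on f A" "small Z"
  obtains A' R where "A' \<subseteq> A" "\<not> small A'" "delta_family_on f A' R" "finite R"
    "\<And>x. x \<in> A' \<Longrightarrow> R \<subseteq> f x \<and> f x \<inter> Z = R \<inter> Z"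
proof -
  obtain A1 R where A1: "A1 \<subseteq> A" "\<not> small A1" "delta_family_on f A1 R"
    using large_delta_subfamily[OF assms(1-3)] by metis
  obtain A' where A': "A' \<subseteq> A1" "\<not> small A'" "\<And>x. x \<in> A' \<Longrightarrow> R \<subseteq> f x \<and> f x \<inter> Z = R \<inter> Z"
    using large_delta_avoiding[OF A1(2,3) assms(4)] by metis
  obtain x where "x \<in> A'"
    using not_small_infinite[OF A'(2)] infinite_imp_nonempty by blast
  then have "R \<subseteq> f x" "x \<in> A"
    using A'(1,3) A1(1) by blast+
  then have "finite R"
    using finite_subset[OF _ assms(2)] by blast
  have "A' \<subseteq> A"
    using A'(1) A1(1) by blast
  moreover have "delta_family_on f A' R"
    using A1(3) A'(1) by (rule delta_family_on_subset)
  ultimately show ?thesis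
    using that[OF _ A'(2) _ \<open>finite R\<close> A'(3)] by blast
qed

lemma large_delta_over_kernel:
  assumes delta: "delta_family_on f Y R" and "R \<subseteq> f e" "finite (f e)"
    and large: "\<not> small GG" and "disjoint GG" "\<Union>GG \<subseteq> Y"
    and D: "\<And>G. G \<in> GG \<Longrightarrow> D G \<subseteq> f e \<union> (\<Union>x\<in>G. f x)"
  obtains GG' T where "GG' \<subseteq> GG" "\<not> small GG'" "\<And>G. G \<in> GG' \<Longrightarrow> D G \<inter> f e = T"
    "delta_family_on D GG' T"
proof -
  have "(\<lambda>G. D G \<inter> f e) ` GG \<subseteq> Pow (f e)"
    by blast
  then have "countable ((\<lambda>G. D G \<inter> f e) ` GG)"
    using \<open>finite (f e)\<close> by (meson countable_finite finite_Pow_iff finite_subset)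
  then obtain T where T: "\<not> small {G\<in>GG. D G \<inter> f e = T}"
    using large_fibre[OF large] by blast
  define GG' where "GG' = {G\<in>GG. D G \<inter> f e = T}"
  \<comment> \<open>outside f e two members could only meet in the kernel R, which lies in f e\<close>
  have "D G1 \<inter> D G2 \<subseteq> f e" if G: "G1 \<in> GG" "G2 \<in> GG" "G1 \<noteq> G2" for G1 G2
  proof
    fix z assume z: "z \<in> D G1 \<inter> D G2"
    show "z \<in> f e"
    proof (rule ccontr)
      assume "z \<notin> f e"
      then obtain x y where xy: "x \<in> G1" "y \<in> G2" "z \<in> f x" "z \<in> f y"
        using z D[OF G(1)] D[OF G(2)] by blast
      have "x \<noteq> y"
        using \<open>disjoint GG\<close> G xy(1,2) unfolding disjoint_def by blast
      moreover have "x \<in> Y" "y \<in> Y"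
        using \<open>\<Union>GG \<subseteq> Y\<close> G xy(1,2) by blast+
      ultimately have "f x \<inter> f y = R"
        using delta unfolding delta_family_on_def by blast
      then show False
        using xy(3,4) \<open>R \<subseteq> f e\<close> \<open>z \<notin> f e\<close> by blast
    qed
  qed
  moreover have "D G \<inter> f e = T" if "G \<in> GG'" for G
    using that unfolding GG'_def by simp
  ultimately have "delta_family_on D GG' T"
    unfolding delta_family_on_def GG'_def by fastforce
  moreover have "GG' \<subseteq> GG" "\<not> small GG'"
    using T unfolding GG'_def by auto
  ultimately show ?thesis
    using that \<open>\<And>G. G \<in> GG' \<Longrightarrow> D G \<inter> f e = T\<close> by blast
qed

lemma card_of_image_disjoint_family:
  assumes "\<not> small F" "disjoint F" "\<And>G. G \<in> F \<Longrightarrow> G \<noteq> {} \<and> G \<subseteq> \<kappa>" "inj_on D F"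
  shows "|D ` F| =o |\<kappa>|"
proof -
  have "|F| =o |\<kappa>|"
    using card_of_disjoint_family_le[OF assms(2,3)] not_small_card_of_ge[OF assms(1)]
    by (simp add: ordIso_iff_ordLeq)
  moreover have "|F| =o |D ` F|"
    using assms(4) card_of_ordIso bij_betw_imageI by blast
  ultimately show ?thesis
    using ordIso_symmetric ordIso_transitive by blast
qed

lemma large_delta_system_image:
  assumes large: "\<not> small F" and "disjoint F" and delta: "delta_family_on D F T"
    and F: "\<And>G. G \<in> F \<Longrightarrow> G \<subseteq> \<kappa> \<and> D G \<inter> G \<noteq> {} \<and> G \<inter> T = {}"
  shows "delta_system (D ` F) T" "|D ` F| =o |\<kappa>|"
proof -
  \<comment> \<open>two equal members would both equal the kernel T, which misses G\<close>
  have "inj_on D F"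
  proof (rule inj_onI)
    fix G1 G2 assume G: "G1 \<in> F" "G2 \<in> F" "D G1 = D G2"
    show "G1 = G2"
    proof (rule ccontr)
      assume "G1 \<noteq> G2"
      then have "D G1 = T"
        using delta G unfolding delta_family_on_def by (metis Int_absorb)
      then show False
        using F[OF G(1)] by blast
    qed
  qed
  have "infinite F"
    using large by (rule not_small_infinite)
  then obtain G1 where "G1 \<in> F"
    using infinite_imp_nonempty by blast
  from \<open>infinite F\<close> have "infinite (F - {G1})"
    by simp
  then obtain G2 where "G2 \<in> F" "G1 \<noteq> G2"
    using infinite_imp_nonempty by blast
  show "delta_system (D ` F) T"
    by (rule delta_system_image[OF delta \<open>inj_on D F\<close> \<open>G1 \<in> F\<close> \<open>G2 \<in> F\<close> \<open>G1 \<noteq> G2\<close>])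
  show "|D ` F| =o |\<kappa>|"
    using F by (intro card_of_image_disjoint_family[OF large \<open>disjoint F\<close> _ \<open>inj_on D F\<close>]) blast
qed

end

section \<open>Rank in finitary matroids\<close>

locale fin_matroid =
  fixes E :: "'a set" and indep :: "'a set \<Rightarrow> bool"
  assumes finitary_matroid: "finitary_matroid E indep"
begin

lemma finitary_matroid_unfolded:
  "\<forall>I. indep I \<longrightarrow> I \<subseteq> E" "indep {}" "\<forall>I J. indep J \<and> I \<subseteq> J \<longrightarrow> indep I"
  "\<forall>I J. finite I \<and> finite J \<and> indep I \<and> indep J \<and> card I < card J
     \<longrightarrow> (\<exists>x\<in>J - I. indep (insert x I))"
  "\<forall>I. I \<subseteq> E \<and> (\<forall>F. F \<subseteq> I \<and> finite F \<longrightarrow> indep F) \<longrightarrow> indep I"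
  by (insert finitary_matroid[unfolded finitary_matroid_def], (elim conjE, assumption)+)

lemma indep_subset_carrier: "indep I \<Longrightarrow> I \<subseteq> E"
  using finitary_matroid_unfolded(1) by blast

lemma indep_empty: "indep {}"
  by (fact finitary_matroid_unfolded(2))

lemma indep_subset: "indep J \<Longrightarrow> I \<subseteq> J \<Longrightarrow> indep I"
  using finitary_matroid_unfolded(3) by blast

lemma indep_augment:
  "finite I \<Longrightarrow> finite J \<Longrightarrow> indep I \<Longrightarrow> indep J \<Longrightarrow> card I < card J \<Longrightarrow> \<exists>x\<in>J - I. indep (insert x I)"
  using finitary_matroid_unfolded(4) by blast

lemma dependent_finite_subset:
  assumes "X \<subseteq> E" "\<not> indep X"
  obtains F where "F \<subseteq> X" "finite F" "\<not> indep F"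
  using finitary_matroid_unfolded(5) assms by blast

abbreviation circuit :: "'a set \<Rightarrow> bool" where "circuit C \<equiv> is_circuit E indep C"

lemma circuit_dependent: "circuit C \<Longrightarrow> \<not> indep C"
  unfolding is_circuit_def by blast

lemma circuit_psubset_indep: "circuit C \<Longrightarrow> D \<subset> C \<Longrightarrow> indep D"
  unfolding is_circuit_def by blast

lemma circuit_finite:
  assumes "circuit C" shows "finite C"
proof -
  obtain F where "F \<subseteq> C" "finite F" "\<not> indep F"
    using assms dependent_finite_subset unfolding is_circuit_def by blast
  then show ?thesis
    using circuit_psubset_indep[OF assms] by (metis psubsetI)
qed

lemma dependent_contains_circuit:
  assumes "X \<subseteq> E" "\<not> indep X"
  obtains C where "C \<subseteq> X" "circuit C"
proof -
  obtain F where "F \<subseteq> X" "finite F" "\<not> indep F"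
    using dependent_finite_subset[OF assms] .
  then obtain Y where Y: "Y \<subseteq> X" "finite Y" "\<not> indep Y"
    and min: "\<And>Y'. Y' \<subseteq> X \<and> finite Y' \<and> \<not> indep Y' \<Longrightarrow> card Y \<le> card Y'"
    using ex_has_least_nat[of "\<lambda>Y. Y \<subseteq> X \<and> finite Y \<and> \<not> indep Y" F card] by blast
  have "circuit Y" unfolding is_circuit_def
  proof (intro conjI allI impI)
    show "Y \<subseteq> E" "\<not> indep Y"
      using Y assms(1) by auto
    fix D assume "D \<subset> Y"
    then have "D \<subseteq> X" "finite D" "card D < card Y"
      using Y psubset_card_mono[OF Y(2)] finite_subset by auto
    then show "indep D"
      using min[of D] by fastforce
  qed
  with Y show ?thesis
    using that by blast
qed

definition rank :: "'a set \<Rightarrow> nat" where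
  "rank X = Max (card ` {I. I \<subseteq> X \<and> indep I})"

lemma card_le_rank: "finite X \<Longrightarrow> I \<subseteq> X \<Longrightarrow> indep I \<Longrightarrow> card I \<le> rank X"
  unfolding rank_def by (rule Max_ge) auto

lemma rank_attained:
  assumes "finite X"
  obtains I where "I \<subseteq> X" "indep I" "card I = rank X"
proof -
  have "rank X \<in> card ` {I. I \<subseteq> X \<and> indep I}"
    unfolding rank_def using assms indep_empty by (intro Max_in) auto
  then obtain I where "I \<subseteq> X" "indep I" "card I = rank X"
    by auto
  then show ?thesis
    by (rule that)
qed

lemma rank_le_card:
  assumes "finite X" shows "rank X \<le> card X"
proof -
  obtain I where "I \<subseteq> X" "card I = rank X"
    using rank_attained[OF assms] .
  then show ?thesis
    using card_mono[OF assms, of I] by linarith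
qed

lemma rank_indep: "finite X \<Longrightarrow> indep X \<Longrightarrow> rank X = card X"
  using card_le_rank[of X X] rank_le_card[of X] by simp

lemma rank_mono:
  assumes "finite Y" "X \<subseteq> Y" shows "rank X \<le> rank Y"
proof -
  obtain I where "I \<subseteq> X" "indep I" "card I = rank X"
    using rank_attained finite_subset[OF assms(2,1)] by blast
  then show ?thesis
    using card_le_rank[OF assms(1), of I] assms(2) by simp
qed

lemma rank_circuit:
  assumes "circuit C" shows "rank C + 1 = card C"
proof -
  have "finite C"
    using assms by (rule circuit_finite)
  obtain I where I: "I \<subseteq> C" "indep I" "card I = rank C"
    using rank_attained[OF \<open>finite C\<close>] .
  then have "I \<subset> C"
    using circuit_dependent[OF assms] by blast
  then have "rank C < card C"
    using I(3) psubset_card_mono[OF \<open>finite C\<close> \<open>I \<subset> C\<close>] by linarith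
  moreover have "C \<noteq> {}"
    using circuit_dependent[OF assms] indep_empty by auto
  then obtain x where "x \<in> C"
    by blast
  then have "card C - 1 \<le> rank C"
    using card_le_rank[OF \<open>finite C\<close>, of "C - {x}"] circuit_psubset_indep[OF assms, of "C - {x}"]
      \<open>finite C\<close> by auto
  ultimately show ?thesis
    by linarith
qed

lemma indep_extend_to_rank:
  assumes "finite X" "J \<subseteq> X" "indep J"
  obtains I where "J \<subseteq> I" "I \<subseteq> X" "indep I" "card I = rank X"
proof -
  obtain I where I: "J \<subseteq> I" "I \<subseteq> X" "indep I"
    and min: "\<And>I'. J \<subseteq> I' \<and> I' \<subseteq> X \<and> indep I' \<Longrightarrow> card X - card I \<le> card X - card I'"
    using ex_has_least_nat[of "\<lambda>I. J \<subseteq> I \<and> I \<subseteq> X \<and> indep I" J "\<lambda>I. card X - card I"] assms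
    by blast
  have max: "card I' \<le> card I" if "J \<subseteq> I' \<and> I' \<subseteq> X \<and> indep I'" for I'
    using min[OF that] card_mono[OF assms(1), of I'] card_mono[OF assms(1) I(2)] that by linarith
  obtain K where K: "K \<subseteq> X" "indep K" "card K = rank X"
    using rank_attained[OF assms(1)] .
  have "finite I" "finite K"
    using I(2) K(1) assms(1) finite_subset by auto
  have "\<not> card I < card K"
  proof
    assume "card I < card K"
    then obtain x where "x \<in> K - I" "indep (insert x I)"
      using indep_augment[OF \<open>finite I\<close> \<open>finite K\<close> I(3) K(2)] by blast
    then show False
      using max[of "insert x I"] I K(1) \<open>finite I\<close> by auto
  qed
  moreover have "card I \<le> rank X"
    using card_le_rank[OF assms(1) I(2,3)] .
  ultimately show ?thesis
    using that[OF I] K(3) by linarith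
qed

lemma rank_Un_Int_le:
  assumes "finite A" "finite B"
  shows "rank (A \<union> B) + rank (A \<inter> B) \<le> rank A + rank B"
proof -
  obtain I where I: "I \<subseteq> A \<inter> B" "indep I" "card I = rank (A \<inter> B)"
    using rank_attained[of "A \<inter> B"] assms by blast
  obtain J where J: "I \<subseteq> J" "J \<subseteq> A \<union> B" "indep J" "card J = rank (A \<union> B)"
    using indep_extend_to_rank[of "A \<union> B" I] I assms by blast
  have "finite J"
    using J(2) assms finite_subset by blast
  have "card (J \<inter> A) \<le> rank A"
    using card_le_rank[OF assms(1), of "J \<inter> A"] indep_subset[OF J(3), of "J \<inter> A"] by blast
  moreover have "card (J \<inter> B) \<le> rank B"
    using card_le_rank[OF assms(2), of "J \<inter> B"] indep_subset[OF J(3), of "J \<inter> B"] by blast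
  moreover have "(J \<inter> A) \<union> (J \<inter> B) = J" "(J \<inter> A) \<inter> (J \<inter> B) = J \<inter> (A \<inter> B)"
    using J(2) by blast+
  then have "card (J \<inter> A) + card (J \<inter> B) = card J + card (J \<inter> (A \<inter> B))"
    using card_Un_Int[of "J \<inter> A" "J \<inter> B"] \<open>finite J\<close> by simp
  moreover have "card I \<le> card (J \<inter> (A \<inter> B))"
    using I(1) J(1) \<open>finite J\<close> by (intro card_mono) auto
  ultimately show ?thesis
    using I(3) J(4) by linarith
qed


lemma rank_Un_le_card:
  assumes "finite X" "finite Q"
  shows "rank (X \<union> Q) \<le> rank X + card Q"
  using rank_Un_Int_le[OF assms] rank_le_card[OF assms(2)] by linarith

lemma circuit_if_rank_insert_eq:
  assumes "finite X" "insert e X \<subseteq> E" "e \<notin> X" "rank (insert e X) = rank X"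
  obtains C where "C \<subseteq> insert e X" "circuit C" "e \<in> C"
proof -
  obtain I where I: "I \<subseteq> X" "indep I" "card I = rank X"
    using rank_attained[OF assms(1)] .
  have "finite I"
    using I(1) assms(1) by (rule finite_subset)
  have "\<not> indep (insert e I)"
  proof
    assume "indep (insert e I)"
    then have "card (insert e I) \<le> rank (insert e X)"
      using card_le_rank[of "insert e X" "insert e I"] assms(1) I(1) by blast
    moreover have "e \<notin> I"
      using I(1) assms(3) by blast
    then have "card (insert e I) = card I + 1"
      using \<open>finite I\<close> by simp
    ultimately show False
      using I(3) assms(4) by linarith
  qed
  moreover have "insert e I \<subseteq> E"
    using I(1) assms(2) by blast
  ultimately obtain C where C: "C \<subseteq> insert e I" "circuit C"
    using dependent_contains_circuit by blast
  have "e \<in> C"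
  proof (rule ccontr)
    assume "e \<notin> C"
    then have "C \<subseteq> I"
      using C(1) by blast
    then show False
      using indep_subset[OF I(2)] circuit_dependent[OF C(2)] by blast
  qed
  with C I(1) show ?thesis
    using that by blast
qed

lemma rank_insert_eq_if_circuit:
  assumes "circuit C" "x \<in> C" "finite W" "C \<subseteq> insert x W"
  shows "rank (insert x W) = rank W"
proof (cases "x \<in> W")
  case True
  then show ?thesis
    by (simp add: insert_absorb)
next
  case False
  have "finite C"
    using assms(1) by (rule circuit_finite)
  have "W \<union> C = insert x W" "W \<inter> C = C - {x}"
    using assms(2,4) False by blast+
  then have "rank (insert x W) + rank (C - {x}) \<le> rank W + rank C"
    using rank_Un_Int_le[OF assms(3) \<open>finite C\<close>] by simp
  moreover have "rank (C - {x}) = card C - 1"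
    using rank_indep[of "C - {x}"] circuit_psubset_indep[OF assms(1), of "C - {x}"] assms(2) \<open>finite C\<close>
    by auto
  moreover have "rank C + 1 = card C"
    using assms(1) by (rule rank_circuit)
  moreover have "rank W \<le> rank (insert x W)"
    using rank_mono[of "insert x W" W] assms(3) by auto
  ultimately show ?thesis
    by linarith
qed

lemma rank_Un_eq_if_circuits:
  assumes "finite G" "finite Z" "\<And>x. x \<in> G \<Longrightarrow> \<exists>C. circuit C \<and> x \<in> C \<and> C \<subseteq> insert x Z"
  shows "rank (G \<union> Z) = rank Z"
  using assms
proof (induction G rule: finite_induct)
  case empty
  then show ?case
    by simp
next
  case (insert x F)
  obtain C where "circuit C" "x \<in> C" "C \<subseteq> insert x Z"
    using insert.prems(2) by blast
  then have "rank (insert x (F \<union> Z)) = rank (F \<union> Z)"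
    using insert.hyps(1) assms(2) by (intro rank_insert_eq_if_circuit) auto
  then show ?case
    using insert by simp
qed

lemma circuit_subset_insert_base_mem:
  assumes "is_base indep B" "circuit C" "C \<subseteq> insert e B"
  shows "e \<in> C"
proof (rule ccontr)
  assume "e \<notin> C"
  then have "C \<subseteq> B"
    using assms(3) by blast
  then show False
    using assms(1) indep_subset[of B C] circuit_dependent[OF assms(2)] unfolding is_base_def by blast
qed

text \<open>C1 \<union> C2 - e \<subseteq> B is independent, so rank (C1 \<union> C2) \<ge> |C1 \<union> C2| - 1; for C1 \<noteq> C2 the set
  C1 \<inter> C2 is independent, and submodularity with rank C = |C| - 1 for circuits gives
  rank (C1 \<union> C2) \<le> |C1 \<union> C2| - 2.\<close>
lemma circuit_subset_insert_base_unique: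
  assumes "is_base indep B" "circuit C1" "C1 \<subseteq> insert e B" "circuit C2" "C2 \<subseteq> insert e B"
  shows "C1 = C2"
proof (rule ccontr)
  assume "C1 \<noteq> C2"
  have "e \<in> C1"
    using circuit_subset_insert_base_mem[OF assms(1-3)] .
  have "finite C1" "finite C2"
    using assms(2,4) circuit_finite by blast+
  have "\<not> C1 \<subseteq> C2"
    using \<open>C1 \<noteq> C2\<close> circuit_psubset_indep[OF assms(4), of C1] circuit_dependent[OF assms(2)] by blast
  then have "indep (C1 \<inter> C2)"
    using circuit_psubset_indep[OF assms(2)] by blast
  then have "rank (C1 \<inter> C2) = card (C1 \<inter> C2)"
    using rank_indep \<open>finite C1\<close> by blast
  moreover have "indep ((C1 \<union> C2) - {e})"
    using assms(1) indep_subset[of B "(C1 \<union> C2) - {e}"] assms(3,5) unfolding is_base_def by blast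
  then have "card ((C1 \<union> C2) - {e}) \<le> rank (C1 \<union> C2)"
    using card_le_rank[of "C1 \<union> C2" "(C1 \<union> C2) - {e}"] \<open>finite C1\<close> \<open>finite C2\<close> by blast
  then have "card (C1 \<union> C2) \<le> rank (C1 \<union> C2) + 1"
    using \<open>e \<in> C1\<close> \<open>finite C1\<close> \<open>finite C2\<close> by simp
  moreover have "card (C1 \<union> C2) + card (C1 \<inter> C2) = card C1 + card C2"
    using card_Un_Int[OF \<open>finite C1\<close> \<open>finite C2\<close>] by simp
  moreover have "rank (C1 \<union> C2) + rank (C1 \<inter> C2) \<le> rank C1 + rank C2"
    using rank_Un_Int_le[OF \<open>finite C1\<close> \<open>finite C2\<close>] .
  moreover have "rank C1 + 1 = card C1" "rank C2 + 1 = card C2"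
    using rank_circuit assms(2,4) by blast+
  ultimately show False
    by linarith
qed

lemma fund_circuit_eq:
  assumes "is_base indep B" "circuit C" "C \<subseteq> insert e B"
  shows "fund_circuit E indep e B = C"
  unfolding fund_circuit_def
  using assms circuit_subset_insert_base_unique[OF assms(1)] by (intro the_equality) blast+

lemma fund_circuit:
  assumes "is_base indep B" "e \<in> E" "e \<notin> B"
  shows "circuit (fund_circuit E indep e B)" "fund_circuit E indep e B \<subseteq> insert e B"
    "e \<in> fund_circuit E indep e B"
proof -
  have "\<not> indep (insert e B)"
    using assms unfolding is_base_def by blast
  moreover have "insert e B \<subseteq> E"
    using assms(1,2) indep_subset_carrier unfolding is_base_def by blast
  ultimately obtain C where "C \<subseteq> insert e B" "circuit C"
    using dependent_contains_circuit by blast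
  then show "circuit (fund_circuit E indep e B)" "fund_circuit E indep e B \<subseteq> insert e B"
    using fund_circuit_eq[OF assms(1)] by simp_all
  then show "e \<in> fund_circuit E indep e B"
    using circuit_subset_insert_base_mem[OF assms(1)] by blast
qed

end

section \<open>Contracting all of the base but S\<close>

locale base_contraction = fin_matroid +
  fixes B S :: "'a set"
  assumes base: "is_base indep B" and S_subset_base: "S \<subseteq> B" and finite_S: "finite S"
begin

abbreviation fc :: "'a \<Rightarrow> 'a set" where "fc e \<equiv> fund_circuit E indep e B"

definition base_support :: "'a set \<Rightarrow> 'a set" where
  "base_support G = (\<Union>x\<in>G. fc x - {x}) - S"

text \<open>crank G is the rank of G in the contraction of M by B - S: by crank_pad below,
  base_support G may be replaced by any finite set between it and B - S.\<close>
definition crank :: "'a set \<Rightarrow> nat" where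
  "crank G = rank (G \<union> base_support G) - card (base_support G)"

lemma fc_outside_base:
  assumes "e \<in> E - B"
  shows "circuit (fc e)" "fc e \<subseteq> insert e B" "e \<in> fc e" "finite (fc e)"
  using fund_circuit[OF base] circuit_finite assms by blast+

lemma indep_base_subset: "X \<subseteq> B \<Longrightarrow> indep X"
  using base indep_subset unfolding is_base_def by blast

lemma base_support_subset: "G \<subseteq> E - B \<Longrightarrow> base_support G \<subseteq> B - S"
  unfolding base_support_def using fc_outside_base(2) by blast

lemma finite_base_support: "finite G \<Longrightarrow> G \<subseteq> E - B \<Longrightarrow> finite (base_support G)"
  unfolding base_support_def using fc_outside_base(4) by blast

lemma base_support_mono: "G \<subseteq> G' \<Longrightarrow> base_support G \<subseteq> base_support G'"
  unfolding base_support_def by blast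

lemma rank_spanned_base_part:
  assumes "finite G" "G \<subseteq> E - B" "finite N" "base_support G \<subseteq> N" "N \<subseteq> B - S"
  shows "rank (G \<union> (N \<union> S)) = card N + card S"
proof -
  have "rank (G \<union> (N \<union> S)) = rank (N \<union> S)"
  proof (rule rank_Un_eq_if_circuits)
    fix x assume "x \<in> G"
    then have "fc x \<subseteq> insert x (N \<union> S)"
      using assms(4) unfolding base_support_def by blast
    then show "\<exists>C. circuit C \<and> x \<in> C \<and> C \<subseteq> insert x (N \<union> S)"
      using fc_outside_base \<open>x \<in> G\<close> assms(2) by blast
  qed (use assms finite_S in auto)
  also have "\<dots> = card (N \<union> S)"
    using assms(3,5) S_subset_base finite_S by (intro rank_indep indep_base_subset) auto
  also have "\<dots> = card N + card S"
    using assms(3,5) finite_S by (intro card_Un_disjoint) auto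
  finally show ?thesis .
qed

lemma crank_pad:
  assumes "finite G" "G \<subseteq> E - B" "finite N" "base_support G \<subseteq> N" "N \<subseteq> B - S"
  shows "crank G + card N = rank (G \<union> N)"
proof -
  define N0 where "N0 = base_support G"
  define Q where "Q = N - N0"
  have "finite N0" "N0 \<subseteq> B - S"
    unfolding N0_def using finite_base_support base_support_subset assms(1,2) by blast+
  have "finite Q" "N = N0 \<union> Q" "N0 \<inter> Q = {}"
    using assms(3,4) unfolding Q_def N0_def by auto
  then have card_N: "card N = card N0 + card Q"
    using \<open>finite N0\<close> card_Un_disjoint by metis
  have "card N0 \<le> rank (G \<union> N0)"
    using card_le_rank[of "G \<union> N0" N0] assms(1) \<open>finite N0\<close> \<open>N0 \<subseteq> B - S\<close> indep_base_subset by blast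
  then have crank: "crank G + card N0 = rank (G \<union> N0)"
    unfolding crank_def N0_def by simp
  have "rank (G \<union> N) \<le> rank (G \<union> N0) + card Q"
    using rank_Un_le_card[of "G \<union> N0" Q] assms(1) \<open>finite N0\<close> \<open>finite Q\<close> \<open>N = N0 \<union> Q\<close>
    by (simp add: Un_assoc)
  moreover have "rank (G \<union> N0) + card Q \<le> rank (G \<union> N)"
  proof -
    have "(G \<union> N) \<union> (G \<union> (N0 \<union> S)) = G \<union> (N \<union> S)"
      using \<open>N = N0 \<union> Q\<close> by blast
    moreover have "(G \<union> N) \<inter> (G \<union> (N0 \<union> S)) = G \<union> N0"
      using \<open>N = N0 \<union> Q\<close> assms(5) by blast
    ultimately have "rank (G \<union> (N \<union> S)) + rank (G \<union> N0) \<le> rank (G \<union> N) + rank (G \<union> (N0 \<union> S))"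
      using rank_Un_Int_le[of "G \<union> N" "G \<union> (N0 \<union> S)"] assms(1,3) \<open>finite N0\<close> finite_S by simp
    moreover have "rank (G \<union> (N \<union> S)) = card N + card S"
      using rank_spanned_base_part[OF assms] .
    moreover have "rank (G \<union> (N0 \<union> S)) = card N0 + card S"
      using rank_spanned_base_part[OF assms(1,2) \<open>finite N0\<close> _ \<open>N0 \<subseteq> B - S\<close>] unfolding N0_def by simp
    ultimately show ?thesis
      using card_N by linarith
  qed
  ultimately show ?thesis
    using crank card_N by linarith
qed

lemma crank_mono:
  assumes "finite G'" "G \<subseteq> G'" "G' \<subseteq> E - B"
  shows "crank G \<le> crank G'"
proof -
  let ?N = "base_support G'"
  have "finite ?N" "?N \<subseteq> B - S"
    using finite_base_support base_support_subset assms(1,3) by blast+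
  then have "crank G + card ?N = rank (G \<union> ?N)" "crank G' + card ?N = rank (G' \<union> ?N)"
    using assms finite_subset[OF assms(2,1)] base_support_mono[OF assms(2)]
    by (intro crank_pad; auto)+
  moreover have "rank (G \<union> ?N) \<le> rank (G' \<union> ?N)"
    using assms(1,2) \<open>finite ?N\<close> by (intro rank_mono) auto
  ultimately show ?thesis
    by linarith
qed

lemma crank_le_card:
  assumes "finite G" "G \<subseteq> E - B"
  shows "crank G \<le> card S"
proof -
  let ?N = "base_support G"
  have "finite ?N" "?N \<subseteq> B - S"
    using finite_base_support base_support_subset assms by blast+
  then have "crank G + card ?N = rank (G \<union> ?N)"
    using assms by (intro crank_pad) auto
  also have "\<dots> \<le> rank (G \<union> (?N \<union> S))"
    using assms(1) \<open>finite ?N\<close> finite_S by (intro rank_mono) auto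
  also have "\<dots> = card ?N + card S"
    using rank_spanned_base_part assms \<open>finite ?N\<close> \<open>?N \<subseteq> B - S\<close> by blast
  finally show ?thesis
    by linarith
qed

lemma circuit_if_crank_insert_eq:
  assumes "finite G" "insert e G \<subseteq> E - B" "e \<notin> G" "crank (insert e G) = crank G"
  obtains D where "circuit D" "e \<in> D" "D \<subseteq> insert e (G \<union> base_support (insert e G))"
proof -
  let ?N = "base_support (insert e G)"
  have "finite ?N" "?N \<subseteq> B - S"
    using finite_base_support base_support_subset assms(1,2) by blast+
  have "crank G + card ?N = rank (G \<union> ?N)"
    using assms \<open>finite ?N\<close> \<open>?N \<subseteq> B - S\<close> base_support_mono[of G "insert e G"] by (intro crank_pad) auto
  moreover have "crank (insert e G) + card ?N = rank (insert e G \<union> ?N)"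
    using assms \<open>finite ?N\<close> \<open>?N \<subseteq> B - S\<close> by (intro crank_pad) auto
  ultimately have "rank (insert e (G \<union> ?N)) = rank (G \<union> ?N)"
    using assms(4) by simp
  moreover have "insert e (G \<union> ?N) \<subseteq> E" "e \<notin> G \<union> ?N"
    using assms(2,3) \<open>?N \<subseteq> B - S\<close> base indep_subset_carrier unfolding is_base_def by blast+
  ultimately show ?thesis
    using circuit_if_rank_insert_eq[of "G \<union> ?N" e] assms(1) \<open>finite ?N\<close> that by blast
qed

lemma crank_stable_circuit:
  assumes "finite G" "insert e G \<subseteq> E - B" "e \<notin> G" "crank (insert e G) = crank G" "fc e \<inter> S \<noteq> {}"
  obtains D where "circuit D" "e \<in> D" "D \<subseteq> fc e \<union> (\<Union>x\<in>G. fc x)" "D \<inter> S = {}" "D \<inter> G \<noteq> {}"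
proof -
  obtain D where D: "circuit D" "e \<in> D" "D \<subseteq> insert e (G \<union> base_support (insert e G))"
    using circuit_if_crank_insert_eq[OF assms(1-4)] .
  have "D \<subseteq> fc e \<union> (\<Union>x\<in>G. fc x)"
    using D(3) fc_outside_base(3) assms(2) unfolding base_support_def by blast
  moreover have "D \<inter> S = {}"
    using D(3) assms(2) S_subset_base unfolding base_support_def by blast
  moreover have "D \<inter> G \<noteq> {}"
  proof
    assume "D \<inter> G = {}"
    then have "D \<subseteq> insert e B"
      using D(3) base_support_subset[OF assms(2)] by blast
    then have "D = fc e"
      using fund_circuit_eq[OF base D(1)] by simp
    then show False
      using \<open>D \<inter> S = {}\<close> assms(5) by simp
  qed
  ultimately show ?thesis
    using that D(1,2) by blast
qed

lemma crank_stable_circuits: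
  assumes "e \<in> E - B" "fc e \<inter> S \<noteq> {}"
    and stable: "\<And>G. G \<in> GG \<Longrightarrow> finite G \<and> G \<subseteq> E - B - {e} \<and> crank (insert e G) = crank G"
  obtains D where "\<And>G. G \<in> GG \<Longrightarrow>
    circuit (D G) \<and> e \<in> D G \<and> D G \<subseteq> fc e \<union> (\<Union>x\<in>G. fc x) \<and> D G \<inter> S = {} \<and> D G \<inter> G \<noteq> {}"
proof -
  have "\<exists>D. circuit D \<and> e \<in> D \<and> D \<subseteq> fc e \<union> (\<Union>x\<in>G. fc x) \<and> D \<inter> S = {} \<and> D \<inter> G \<noteq> {}"
    if "G \<in> GG" for G
  proof -
    have "finite G" "insert e G \<subseteq> E - B" "e \<notin> G" "crank (insert e G) = crank G"
      using stable[OF that] assms(1) by auto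
    then show ?thesis
      using crank_stable_circuit[of G e] assms(2) by metis
  qed
  then show ?thesis
    using that by metis
qed

end

section \<open>The \<Delta>-system of circuits\<close>

locale large_base_contraction = base_contraction E indep B S + regular_uncountable H
  for E :: "'a set" and indep B S and H :: "'a set" +
  assumes H_outside_base: "H \<subseteq> E - B"
begin

lemma crank_least_bound:
  assumes "Y \<subseteq> E - B"
  obtains Y0 m where "Y0 \<subseteq> Y" "small (Y - Y0)" "\<And>G. finite G \<Longrightarrow> G \<subseteq> Y0 \<Longrightarrow> crank G \<le> m"
    "\<And>Y'. Y' \<subseteq> Y0 \<Longrightarrow> small (Y - Y') \<Longrightarrow> \<exists>G\<subseteq>Y'. finite G \<and> crank G = m"
proof -
  define P where "P k \<longleftrightarrow> (\<exists>Y0\<subseteq>Y. small (Y - Y0) \<and> (\<forall>G. finite G \<and> G \<subseteq> Y0 \<longrightarrow> crank G \<le> k))" for k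
  have "P (card S)"
    unfolding P_def using crank_le_card assms small_finite[of "{}"] by auto
  define m where "m = (LEAST k. P k)"
  have "P m"
    unfolding m_def using \<open>P (card S)\<close> by (rule LeastI)
  then obtain Y0 where Y0: "Y0 \<subseteq> Y" "small (Y - Y0)" "\<And>G. finite G \<Longrightarrow> G \<subseteq> Y0 \<Longrightarrow> crank G \<le> m"
    unfolding P_def by blast
  have attained: "\<exists>G\<subseteq>Y'. finite G \<and> crank G = m" if Y': "Y' \<subseteq> Y0" "small (Y - Y')" for Y'
  proof (rule ccontr)
    assume "\<not> ?thesis"
    then have less: "crank G < m" if "finite G" "G \<subseteq> Y'" for G
      using Y0(3)[of G] Y'(1) that by fastforce
    then have "P (m - 1)"
      unfolding P_def using Y' Y0(1) by (intro exI[of _ Y']) fastforce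
    then have "m \<le> m - 1"
      unfolding m_def by (rule Least_le)
    then show False
      using less[of "{}"] by simp
  qed
  show ?thesis
    using that[OF Y0 attained] .
qed

lemma stable_set_avoiding:
  assumes "Y \<subseteq> E - B" "\<not> small Y" "Y0 \<subseteq> Y" "small (Y - Y0)"
    and bound: "\<And>G. finite G \<Longrightarrow> G \<subseteq> Y0 \<Longrightarrow> crank G \<le> m"
    and attained: "\<And>Y'. Y' \<subseteq> Y0 \<Longrightarrow> small (Y - Y') \<Longrightarrow> \<exists>G\<subseteq>Y'. finite G \<and> crank G = m"
    and "e \<in> Y0" "small U"
  obtains G where "G \<noteq> {}" "finite G" "G \<subseteq> Y0 - {e} - U" "crank (insert e G) = crank G"
proof -
  define Y' where "Y' = Y0 - {e} - U"
  have "Y - Y' \<subseteq> (Y - Y0) \<union> ({e} \<union> U)"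
    unfolding Y'_def by blast
  moreover have "small ((Y - Y0) \<union> ({e} \<union> U))"
    using assms(4,8) small_finite[of "{e}"] by (intro small_Un) auto
  ultimately have "small (Y - Y')"
    by (rule small_subset)
  then obtain G0 where G0: "G0 \<subseteq> Y'" "finite G0" "crank G0 = m"
    using attained[of Y'] unfolding Y'_def by blast
  have "\<not> small (Y - (Y - Y'))"
    using assms(2) \<open>small (Y - Y')\<close> by (rule not_small_Diff)
  then have "\<not> small Y'"
    using small_subset[of "Y - (Y - Y')" Y'] by blast
  then have "infinite (Y' - G0)"
    using not_small_infinite G0(2) by simp
  then obtain x where "x \<in> Y' - G0"
    using infinite_imp_nonempty by blast
  define G where "G = insert x G0"
  have "G \<subseteq> Y'" "finite G" "insert e G \<subseteq> Y0"
    using G0 \<open>x \<in> Y' - G0\<close> \<open>e \<in> Y0\<close> unfolding G_def Y'_def by auto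
  have "insert e G \<subseteq> E - B"
    using \<open>insert e G \<subseteq> Y0\<close> assms(1,3) by blast
  then have "m \<le> crank G" "crank G \<le> crank (insert e G)"
    using crank_mono[of G G0] crank_mono[of "insert e G" G] G0(3) \<open>finite G\<close> unfolding G_def by auto
  moreover have "crank (insert e G) \<le> m"
    using bound \<open>finite G\<close> \<open>insert e G \<subseteq> Y0\<close> by simp
  ultimately show ?thesis
    using that[of G] \<open>G \<subseteq> Y'\<close> \<open>finite G\<close> unfolding G_def Y'_def by auto
qed

lemma large_stable_family:
  assumes "Y \<subseteq> E - B" "\<not> small Y"
  obtains e GG where "e \<in> Y" "\<not> small GG" "disjoint GG"
    "\<And>G. G \<in> GG \<Longrightarrow> G \<noteq> {} \<and> finite G \<and> G \<subseteq> Y - {e} \<and> crank (insert e G) = crank G"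
proof -
  obtain Y0 m where Y0: "Y0 \<subseteq> Y" "small (Y - Y0)" "\<And>G. finite G \<Longrightarrow> G \<subseteq> Y0 \<Longrightarrow> crank G \<le> m"
    "\<And>Y'. Y' \<subseteq> Y0 \<Longrightarrow> small (Y - Y') \<Longrightarrow> \<exists>G\<subseteq>Y'. finite G \<and> crank G = m"
    using crank_least_bound[OF assms(1)] by metis
  have "\<not> small (Y - (Y - Y0))"
    using assms(2) Y0(2) by (rule not_small_Diff)
  then have "infinite Y0"
    using small_subset[of "Y - (Y - Y0)" Y0] not_small_infinite by blast
  then obtain e where "e \<in> Y0"
    using infinite_imp_nonempty by blast
  define A where "A = {G. G \<noteq> {} \<and> finite G \<and> G \<subseteq> Y0 - {e} \<and> crank (insert e G) = crank G}"
  have extend: "\<exists>G\<in>A - A'. \<forall>G'\<in>A'. id G \<inter> id G' = {}" if A': "A' \<subseteq> A" "small A'" for A'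
  proof -
    have "small (\<Union>G\<in>A'. G)"
      by (rule small_UN[OF A'(2)]) (use A'(1) small_finite in \<open>auto simp: A_def\<close>)
    then have "small (\<Union>A')"
      by simp
    then obtain G where "G \<noteq> {}" "finite G" "G \<subseteq> Y0 - {e} - \<Union>A'" "crank (insert e G) = crank G"
      using stable_set_avoiding[OF assms Y0 \<open>e \<in> Y0\<close>] by metis
    then have "G \<in> A - A'" "\<forall>G'\<in>A'. G \<inter> G' = {}"
      unfolding A_def by blast+
    then show ?thesis
      by auto
  qed
  obtain GG where GG: "GG \<subseteq> A" "\<not> small GG" "disjoint_family_on id GG"
    by (rule large_disjoint_subfamily[OF extend])
  have "disjoint GG"
    using disjoint_family_on_disjoint_image[OF GG(3)] by simp
  show ?thesis
  proof (rule that[OF _ GG(2) \<open>disjoint GG\<close>])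
    show "e \<in> Y"
      using \<open>e \<in> Y0\<close> Y0(1) by blast
    fix G assume "G \<in> GG"
    then show "G \<noteq> {} \<and> finite G \<and> G \<subseteq> Y - {e} \<and> crank (insert e G) = crank G"
      using GG(1) Y0(1) unfolding A_def by blast
  qed
qed

lemma large_delta_system_of_circuits:
  assumes "Y \<subseteq> H" "\<not> small Y" "delta_family_on fc Y R"
    and kernel: "\<And>x. x \<in> Y \<Longrightarrow> R \<subseteq> fc x \<and> fc x \<inter> S \<noteq> {}"
  obtains e \<D> T where "e \<in> Y" "delta_system \<D> T" "|\<D>| =o |H|" "\<And>D. D \<in> \<D> \<Longrightarrow> circuit D"
    "\<Union>\<D> \<subseteq> (\<Union>x\<in>Y. fc x)" "e \<in> T" "T \<subseteq> fc e" "T \<inter> S = {}"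
proof -
  have "Y \<subseteq> E - B"
    using assms(1) H_outside_base by blast
  obtain e GG where e: "e \<in> Y" and GG: "\<not> small GG" "disjoint GG"
    and stable: "\<And>G. G \<in> GG \<Longrightarrow> G \<noteq> {} \<and> finite G \<and> G \<subseteq> Y - {e} \<and> crank (insert e G) = crank G"
    using large_stable_family[OF \<open>Y \<subseteq> E - B\<close> assms(2)] by metis
  have "e \<in> E - B" "fc e \<inter> S \<noteq> {}"
    using e \<open>Y \<subseteq> E - B\<close> kernel by blast+
  moreover have "finite G \<and> G \<subseteq> E - B - {e} \<and> crank (insert e G) = crank G" if "G \<in> GG" for G
    using stable[OF that] \<open>Y \<subseteq> E - B\<close> by blast
  ultimately obtain D where D: "\<And>G. G \<in> GG \<Longrightarrow>
      circuit (D G) \<and> e \<in> D G \<and> D G \<subseteq> fc e \<union> (\<Union>x\<in>G. fc x) \<and> D G \<inter> S = {} \<and> D G \<inter> G \<noteq> {}"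
    using crank_stable_circuits by metis
  have D_sub: "\<And>G. G \<in> GG \<Longrightarrow> D G \<subseteq> fc e \<union> (\<Union>x\<in>G. fc x)"
    using D by blast
  have "\<Union>GG \<subseteq> Y"
    using stable by blast
  obtain GG' T where GG': "GG' \<subseteq> GG" "\<not> small GG'" and T: "\<And>G. G \<in> GG' \<Longrightarrow> D G \<inter> fc e = T"
    and delta: "delta_family_on D GG' T"
    using large_delta_over_kernel[OF assms(3) _ _ GG \<open>\<Union>GG \<subseteq> Y\<close> D_sub] kernel[OF e]
      fc_outside_base(4)[OF \<open>e \<in> E - B\<close>] by metis
  have "G \<subseteq> H \<and> D G \<inter> G \<noteq> {} \<and> G \<inter> T = {}" if "G \<in> GG'" for G
  proof -
    have "G \<in> GG"
      using that GG'(1) by blast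
    then have "G \<subseteq> Y - {e}" "D G \<inter> G \<noteq> {}"
      using stable D by blast+
    moreover have "G \<inter> fc e = {}"
      using \<open>G \<subseteq> Y - {e}\<close> fc_outside_base(2)[OF \<open>e \<in> E - B\<close>] \<open>Y \<subseteq> E - B\<close> by blast
    ultimately show ?thesis
      using T[OF that] assms(1) by blast
  qed
  then have "delta_system (D ` GG') T" "|D ` GG'| =o |H|"
    using large_delta_system_image[OF GG'(2) pairwise_subset[OF GG(2) GG'(1)] delta] by blast+
  have "circuit C" if "C \<in> D ` GG'" for C
    using that D GG'(1) by blast
  have "\<Union>(D ` GG') \<subseteq> (\<Union>x\<in>Y. fc x)"
  proof
    fix z assume "z \<in> \<Union>(D ` GG')"
    then obtain G where "G \<in> GG" "z \<in> D G"
      using GG'(1) by blast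
    then have "z \<in> fc e \<union> (\<Union>x\<in>G. fc x)" "G \<subseteq> Y"
      using D_sub stable by blast+
    then show "z \<in> (\<Union>x\<in>Y. fc x)"
      using e by blast
  qed
  obtain G where "G \<in> GG'"
    using not_small_infinite[OF GG'(2)] infinite_imp_nonempty by blast
  then have "e \<in> D G" "D G \<inter> S = {}"
    using D GG'(1) by blast+
  then have "e \<in> T" "T \<subseteq> fc e" "T \<inter> S = {}"
    using T[OF \<open>G \<in> GG'\<close>] fc_outside_base(3)[OF \<open>e \<in> E - B\<close>] by blast+
  show ?thesis
    by (rule that) fact+
qed

end

theorem lemma3p4:
  fixes E :: "'a set" and indep :: "'a set \<Rightarrow> bool" and B B' H :: "'a set"
  assumes M: "finitary_matroid E indep"
    and base: "is_base indep B"
    and H: "H \<subseteq> E - B"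
    and unc: "uncountable H"
    and reg: "regularCard (card_of H)"
    and B'sub: "B' \<subseteq> B"
    and B'card: "(card_of B', card_of H) \<in> ordLess"
    and meet: "\<forall>e\<in>H. fund_circuit E indep e B \<inter> B' \<noteq> {}"
  shows "\<exists>e\<in>H. \<exists>D K. delta_system D K \<and> (card_of D, card_of H) \<in> ordIso \<and>
           (\<forall>C\<in>D. is_circuit E indep C) \<and>
           \<Union>D \<subseteq> (\<Union>e'\<in>H. fund_circuit E indep e' B) \<and>
           e \<in> K \<and> K \<subseteq> fund_circuit E indep e B - B'"
proof -
  interpret regular_uncountable H
    using unc reg by unfold_locales
  interpret fin_matroid E indep
    using M by unfold_locales
  let ?C = "\<lambda>e. fund_circuit E indep e B"
  have C: "?C e \<subseteq> insert e B" "e \<in> ?C e" "finite (?C e)" if "e \<in> H" for e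
    using fund_circuit[OF base] circuit_finite H that by blast+
  have "inj_on ?C H"
    using C(1,2) H by (intro inj_onI) blast
  obtain H' R where H': "H' \<subseteq> H" "\<not> small H'" "delta_family_on ?C H' R" "finite R"
    "\<And>x. x \<in> H' \<Longrightarrow> R \<subseteq> ?C x \<and> ?C x \<inter> B' = R \<inter> B'"
    using large_delta_subfamily_avoiding[OF _ C(3) \<open>inj_on ?C H\<close> B'card] ordLess_irreflexive by metis
  interpret large_base_contraction E indep B "R \<inter> B'" H
    by unfold_locales (use base B'sub H'(4) H in auto)
  have "R \<subseteq> ?C x \<and> ?C x \<inter> (R \<inter> B') \<noteq> {}" if "x \<in> H'" for x
    using H'(1,5) meet that by blast
  then obtain e \<D> T where e: "e \<in> H'" and \<D>: "delta_system \<D> T" "|\<D>| =o |H|"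
    "\<And>D. D \<in> \<D> \<Longrightarrow> circuit D" "\<Union>\<D> \<subseteq> (\<Union>x\<in>H'. ?C x)"
    and T: "e \<in> T" "T \<subseteq> ?C e" "T \<inter> (R \<inter> B') = {}"
    using large_delta_system_of_circuits[OF H'(1-3)] by metis
  have "e \<in> H" "\<Union>\<D> \<subseteq> (\<Union>e'\<in>H. ?C e')"
    using H'(1) e \<D>(4) by blast+
  moreover have "T \<subseteq> ?C e - B'"
    using H'(5)[OF e] T(2,3) by blast
  ultimately show ?thesis
    using \<D>(1-3) T(1) by blast
qed

end
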